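(* If $\Phi=(\varphi_n)_{n\in\mathbb{N}}$ is a depth-bounded fuzzy bisimulation between fuzzy automata $\mathcal{A}$ and $\mathcal{A}'$, then for every $n\in\mathbb{N}$ and every $\alpha\in\mathcal{F}^n_{\leftrightarrow}$: $\varphi_n^{-1}\circ\alpha^{\mathcal{A}}\le\alpha^{\mathcal{A}'}$ and $\varphi_n\circ\alpha^{\mathcal{A}'}\le\alpha^{\mathcal{A}}$. Consequently $\varphi_n(x,x')\le\bigwedge_{\alpha\in\mathcal{F}^n_{\leftrightarrow}}(\alpha^{\mathcal{A}}(x)\Leftrightarrow\alpha^{\mathcal{A}'}(x'))$ for all $(x,x')\in A\times A'$.
   Context: $\mathcal{L}=\langle L,\le,\otimes,\Rightarrow,0,1\rangle$ is a complete residuated lattice: $\langle L,\le,0,1\rangle$ is a complete lattice with least element $0$ and greatest element $1$, $\langle L,\otimes,1\rangle$ is a commutative monoid, and $x\otimes y\le z$ iff $x\le (y\Rightarrow z)$; $x\Leftrightarrow y=(x\Rightarrow y)\wedge(y\Rightarrow x)$. Fuzzy relations are maps into $L$ ordered pointwise; $\varphi^{-1}(b,a)=\varphi(a,b)$; $(\varphi\circ\psi)(a,c)=\bigvee_b\varphi(a,b)\otimes\psi(b,c)$, $(\varphi\circ g)(a)=\bigvee_b\varphi(a,b)\otimes g(b)$. A fuzzy automaton over $\Sigma$ is $\mathcal{A}=\langle A,\delta^{\mathcal{A}},\sigma^{\mathcal{A}},\tau^{\mathcal{A}}\rangle$ with $A$ nonempty, $\delta^{\mathcal{A}}:A\times\Sigma\times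 A\to L$, $\sigma^{\mathcal{A}},\tau^{\mathcal{A}}:A\to L$; $\delta^{\mathcal{A}}_s(x,y)=\delta^{\mathcal{A}}(x,s,y)$; similarly $\mathcal{A}'$ with states $A'$. The sets $\mathcal{F}^n_{\leftrightarrow}$ are the smallest sets of formulas with: $\tau\in\mathcal{F}^n_{\leftrightarrow}$; $s\in\Sigma,\alpha\in\mathcal{F}^n_{\leftrightarrow}\Rightarrow(s\circ\alpha)\in\mathcal{F}^{n+1}_{\leftrightarrow}$; $a\in L,\alpha\in\mathcal{F}^n_{\leftrightarrow}\Rightarrow(a\leftrightarrow\alpha)\in\mathcal{F}^n_{\leftrightarrow}$; $\alpha,\beta\in\mathcal{F}^n_{\leftrightarrow}\Rightarrow(\alpha\wedge\beta)\in\mathcal{F}^n_{\leftrightarrow}$. Semantics: $\tau^{\mathcal{A}}$ is the terminal fuzzy set; $(s\circ\alpha)^{\mathcal{A}}=\delta^{\mathcal{A}}_s\circ\alpha^{\mathcal{A}}$; $(a\leftrightarrow\alpha)^{\mathcal{A}}(x)=a\Leftrightarrow\alpha^{\mathcal{A}}(x)$; $(\alpha\wedge\beta)^{\mathcal{A}}(x)=\alpha^{\mathcal{A}}(x)\wedge\beta^{\mathcal{A}}(x)$. A depth-bounded fuzzy bisimulation between $\mathcal{A}$ and $\mathcal{A}'$ is a sequence $(\varphi_n)_{n\in\mathbb{N}}$ of fuzzy relations $A\times A'\to L$ with $\varphi_n\le\varphi_{n-1}$ ($n\ge1$), $\varphi_0^{-1}\circ\tau^{\mathcal{A}}\le\tau^{\mathcal{A}'}$,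 $\varphi_0\circ\tau^{\mathcal{A}'}\le\tau^{\mathcal{A}}$, and for all $s\in\Sigma,n\ge1$: $\varphi_n^{-1}\circ\delta^{\mathcal{A}}_s\le\delta^{\mathcal{A}'}_s\circ\varphi_{n-1}^{-1}$ and $\varphi_n\circ\delta^{\mathcal{A}'}_s\le\delta^{\mathcal{A}}_s\circ\varphi_{n-1}$. *)

theory Defs
  imports Main
begin

definition complete_residuated_lattice ::
  "('l::complete_lattice \<Rightarrow> 'l \<Rightarrow> 'l) \<Rightarrow> ('l \<Rightarrow> 'l \<Rightarrow> 'l) \<Rightarrow> bool" where
  "complete_residuated_lattice otimes imp \<longleftrightarrow>
     (\<forall>x y z. otimes (otimes x y) z = otimes x (otimes y z)) \<and>
     (\<forall>x y. otimes x y = otimes y x) \<and>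
     (\<forall>x. otimes x top = x) \<and>
     (\<forall>x y z. otimes x y \<le> z \<longleftrightarrow> x \<le> imp y z)"

definition biimp :: "('l::complete_lattice \<Rightarrow> 'l \<Rightarrow> 'l) \<Rightarrow> 'l \<Rightarrow> 'l \<Rightarrow> 'l" where
  "biimp imp x y = inf (imp x y) (imp y x)"

definition rel_comp ::
  "('l::complete_lattice \<Rightarrow> 'l \<Rightarrow> 'l) \<Rightarrow> ('a \<Rightarrow> 'b \<Rightarrow> 'l) \<Rightarrow> ('b \<Rightarrow> 'c \<Rightarrow> 'l) \<Rightarrow> 'a \<Rightarrow> 'c \<Rightarrow> 'l" where
  "rel_comp otimes R S a c = (SUP b. otimes (R a b) (S b c))"

definition rel_set_comp ::
  "('l::complete_lattice \<Rightarrow> 'l \<Rightarrow> 'l) \<Rightarrow> ('a \<Rightarrow> 'b \<Rightarrow> 'l) \<Rightarrow> ('b \<Rightarrow> 'l) \<Rightarrow> 'a \<Rightarrow> 'l" where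
  "rel_set_comp otimes R g a = (SUP b. otimes (R a b) (g b))"

definition conv :: "('a \<Rightarrow> 'b \<Rightarrow> 'l) \<Rightarrow> 'b \<Rightarrow> 'a \<Rightarrow> 'l" where
  "conv R b a = R a b"

datatype ('l, 's) fformula =
    Tau
  | Comp 's "('l, 's) fformula"
  | Biimp 'l "('l, 's) fformula"
  | Conj "('l, 's) fformula" "('l, 's) fformula"

inductive in_F :: "nat \<Rightarrow> ('l, 's) fformula \<Rightarrow> bool" where
  tau: "in_F n Tau"
| comp: "in_F n \<alpha> \<Longrightarrow> in_F (Suc n) (Comp s \<alpha>)"
| biimp: "in_F n \<alpha> \<Longrightarrow> in_F n (Biimp a \<alpha>)"
| conj: "in_F n \<alpha> \<Longrightarrow> in_F n \<beta> \<Longrightarrow> in_F n (Conj \<alpha> \<beta>)"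

fun sem :: "('l::complete_lattice \<Rightarrow> 'l \<Rightarrow> 'l) \<Rightarrow> ('l \<Rightarrow> 'l \<Rightarrow> 'l) \<Rightarrow>
    ('a \<Rightarrow> 's \<Rightarrow> 'a \<Rightarrow> 'l) \<Rightarrow> ('a \<Rightarrow> 'l) \<Rightarrow> ('l, 's) fformula \<Rightarrow> 'a \<Rightarrow> 'l" where
  "sem otimes imp delta tau Tau = tau"
| "sem otimes imp delta tau (Comp s \<alpha>) =
     rel_set_comp otimes (\<lambda>x y. delta x s y) (sem otimes imp delta tau \<alpha>)"
| "sem otimes imp delta tau (Biimp a \<alpha>) = (\<lambda>x. biimp imp a (sem otimes imp delta tau \<alpha> x))"
| "sem otimes imp delta tau (Conj \<alpha> \<beta>) =
     (\<lambda>x. inf (sem otimes imp delta tau \<alpha> x) (sem otimes imp delta tau \<beta> x))"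

definition depth_bounded_bisim ::
  "('l::complete_lattice \<Rightarrow> 'l \<Rightarrow> 'l) \<Rightarrow> ('a \<Rightarrow> 's \<Rightarrow> 'a \<Rightarrow> 'l) \<Rightarrow> ('a \<Rightarrow> 'l) \<Rightarrow>
    ('b \<Rightarrow> 's \<Rightarrow> 'b \<Rightarrow> 'l) \<Rightarrow> ('b \<Rightarrow> 'l) \<Rightarrow> (nat \<Rightarrow> 'a \<Rightarrow> 'b \<Rightarrow> 'l) \<Rightarrow> bool" where
  "depth_bounded_bisim otimes delta tau delta' tau' phi \<longleftrightarrow>
     (\<forall>n. phi (Suc n) \<le> phi n) \<and>
     rel_set_comp otimes (conv (phi 0)) tau \<le> tau' \<and>
     rel_set_comp otimes (phi 0) tau' \<le> tau \<and>
     (\<forall>s n. n \<ge> 1 \<longrightarrow>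
        rel_comp otimes (conv (phi n)) (\<lambda>x y. delta x s y)
          \<le> rel_comp otimes (\<lambda>x y. delta' x s y) (conv (phi (n - 1))) \<and>
        rel_comp otimes (phi n) (\<lambda>x y. delta' x s y)
          \<le> rel_comp otimes (\<lambda>x y. delta x s y) (phi (n - 1)))"

end

theory Submission
  imports Defs
begin

text \<open>Induction on formulas, proving both inequalities simultaneously since the case
  \<open>a \<leftrightarrow> \<alpha>\<close> needs both. Writing \<open>u = \<alpha>\<^sup>\<A>\<close> and \<open>v = \<alpha>\<^sup>\<A>\<^sup>'\<close>, the case \<open>s \<circ> \<alpha>\<close> is the calculation
  \<open>\<phi>\<^sub>n\<^sub>+\<^sub>1\<inverse> \<circ> (\<delta>\<^sub>s \<circ> u) = (\<phi>\<^sub>n\<^sub>+\<^sub>1\<inverse> \<circ> \<delta>\<^sub>s) \<circ> u \<le> (\<delta>'\<^sub>s \<circ> \<phi>\<^sub>n\<inverse>) \<circ> u = \<delta>'\<^sub>s \<circ> (\<phi>\<^sub>n\<inverse> \<circ> u) \<le> \<delta>'\<^sub>s \<circ> v\<close>,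
  where associativity holds because \<open>\<otimes>\<close> distributes over arbitrary joins. Each step is proved
  in one direction only; the other is the same step for the converse bisimulation
  \<open>(\<phi>\<^sub>n\<inverse>)\<^sub>n\<close> from \<open>\<A>'\<close> to \<open>\<A>\<close>. By adjointness, the two inequalities at a pair \<open>(x, x')\<close>
  say exactly that \<open>\<phi>\<^sub>n(x,x') \<le> u(x) \<Leftrightarrow> v(x')\<close>.\<close>

locale residuated =
  fixes otimes imp :: "'l::complete_lattice \<Rightarrow> 'l \<Rightarrow> 'l"
  assumes complete_residuated_lattice: "complete_residuated_lattice otimes imp"
begin

lemma otimes_assoc: "otimes (otimes x y) z = otimes x (otimes y z)"
  using complete_residuated_lattice unfolding complete_residuated_lattice_def by blast

lemma otimes_commute: "otimes x y = otimes y x"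
  using complete_residuated_lattice unfolding complete_residuated_lattice_def by blast

lemma residuation: "otimes x y \<le> z \<longleftrightarrow> x \<le> imp y z"
  using complete_residuated_lattice unfolding complete_residuated_lattice_def by blast

lemma otimes_imp_le: "otimes (imp x y) x \<le> y"
  using residuation by blast

lemma otimes_mono: "x \<le> x' \<Longrightarrow> y \<le> y' \<Longrightarrow> otimes x y \<le> otimes x' y'"
  by (metis order_trans residuation otimes_commute order_refl)

lemma otimes_SUP: "otimes x (SUP b. f b) = (SUP b. otimes x (f b))"
proof (rule antisym)
  have "f b \<le> imp x (SUP b. otimes x (f b))" for b
    unfolding residuation[symmetric] otimes_commute[of "f b"] by (rule SUP_upper) simp
  then have "(SUP b. f b) \<le> imp x (SUP b. otimes x (f b))"
    by (rule SUP_least)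
  then show "otimes x (SUP b. f b) \<le> (SUP b. otimes x (f b))"
    unfolding otimes_commute[of x] residuation .
  show "(SUP b. otimes x (f b)) \<le> otimes x (SUP b. f b)"
    by (rule SUP_least) (simp add: otimes_mono SUP_upper)
qed

lemma SUP_otimes: "otimes (SUP b. f b) x = (SUP b. otimes (f b) x)"
proof -
  have "otimes (SUP b. f b) x = (SUP b. otimes x (f b))"
    by (subst otimes_commute) (rule otimes_SUP)
  also have "\<dots> = (SUP b. otimes (f b) x)"
    by (subst otimes_commute) (rule refl)
  finally show ?thesis .
qed

lemma le_biimp_iff: "p \<le> biimp imp u v \<longleftrightarrow> otimes p u \<le> v \<and> otimes p v \<le> u"
  unfolding biimp_def by (simp add: residuation)

lemma otimes_biimp_le:
  assumes "otimes p u \<le> v" and "otimes p v \<le> u"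
  shows "otimes p (biimp imp a u) \<le> biimp imp a v"
proof -
  have "otimes (otimes p (imp a u)) a = otimes p (otimes (imp a u) a)"
    by (rule otimes_assoc)
  also have "\<dots> \<le> otimes p u"
    by (simp add: otimes_mono otimes_imp_le)
  finally have to_v: "otimes p (imp a u) \<le> imp a v"
    using assms(1) residuation order_trans by blast
  have "otimes (otimes p (imp u a)) v = otimes (imp u a) (otimes p v)"
    by (metis otimes_assoc otimes_commute)
  also have "\<dots> \<le> otimes (imp u a) u"
    using assms(2) by (simp add: otimes_mono)
  finally have from_v: "otimes p (imp u a) \<le> imp v a"
    using otimes_imp_le residuation order_trans by blast
  show ?thesis
    unfolding biimp_def using to_v from_v
    by (meson le_inf_iff order_trans otimes_mono order_refl inf_le1 inf_le2)
qed

lemma rel_set_comp_le_iff: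
  "rel_set_comp otimes R g \<le> h \<longleftrightarrow> (\<forall>a b. otimes (R a b) (g b) \<le> h a)"
  unfolding rel_set_comp_def le_fun_def
  by (auto intro: SUP_least order_trans[OF SUP_upper[OF UNIV_I]])

lemma rel_set_comp_mono:
  "R \<le> R' \<Longrightarrow> g \<le> g' \<Longrightarrow> rel_set_comp otimes R g \<le> rel_set_comp otimes R' g'"
  unfolding rel_set_comp_def le_fun_def by (intro allI SUP_mono) (blast intro: otimes_mono)

lemma rel_set_comp_assoc:
  "rel_set_comp otimes (rel_comp otimes R S) g = rel_set_comp otimes R (rel_set_comp otimes S g)"
proof
  fix a
  have "rel_set_comp otimes (rel_comp otimes R S) g a
      = (SUP c. SUP b. otimes (R a b) (otimes (S b c) (g c)))"
    unfolding rel_set_comp_def rel_comp_def by (simp add: SUP_otimes otimes_assoc)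
  also have "\<dots> = (SUP b. SUP c. otimes (R a b) (otimes (S b c) (g c)))"
    by (rule SUP_commute)
  also have "\<dots> = rel_set_comp otimes R (rel_set_comp otimes S g) a"
    unfolding rel_set_comp_def by (simp add: otimes_SUP)
  finally show "rel_set_comp otimes (rel_comp otimes R S) g a
      = rel_set_comp otimes R (rel_set_comp otimes S g) a" .
qed

lemma rel_set_comp_inf_le:
  "rel_set_comp otimes R (\<lambda>x. inf (u x) (v x))
     \<le> (\<lambda>a. inf (rel_set_comp otimes R u a) (rel_set_comp otimes R v a))"
  using rel_set_comp_mono[of R R] by (simp add: le_fun_def)

lemma rel_set_comp_biimp_le:
  assumes "rel_set_comp otimes R u \<le> v" and "rel_set_comp otimes (conv R) v \<le> u"
  shows "rel_set_comp otimes R (\<lambda>x. biimp imp c (u x)) \<le> (\<lambda>x. biimp imp c (v x))"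
  using assms otimes_biimp_le unfolding rel_set_comp_le_iff conv_def by blast

end

lemma conv_conv [simp]: "conv (conv R) = R"
  by (simp add: conv_def fun_eq_iff)

lemma depth_bounded_bisim_antimono:
  assumes "depth_bounded_bisim otimes delta tau delta' tau' phi" and "m \<le> n"
  shows "phi n \<le> phi m"
  using assms(2)
proof (induction n)
  case (Suc n)
  with assms(1) show ?case
    unfolding depth_bounded_bisim_def by (metis le_Suc_eq order_trans order_refl)
qed simp

lemma depth_bounded_bisim_conv:
  "depth_bounded_bisim otimes delta tau delta' tau' phi \<Longrightarrow>
   depth_bounded_bisim otimes delta' tau' delta tau (\<lambda>n. conv (phi n))"
  unfolding depth_bounded_bisim_def by (auto simp: le_fun_def conv_def)

context residuated
begin

lemma depth_bounded_bisim_tau: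
  assumes "depth_bounded_bisim otimes delta tau delta' tau' phi"
  shows "rel_set_comp otimes (conv (phi n)) tau \<le> tau'"
proof -
  have "conv (phi n) \<le> conv (phi 0)"
    using depth_bounded_bisim_antimono[OF assms] by (simp add: le_fun_def conv_def)
  then have "rel_set_comp otimes (conv (phi n)) tau \<le> rel_set_comp otimes (conv (phi 0)) tau"
    by (simp add: rel_set_comp_mono)
  also have "\<dots> \<le> tau'"
    using assms unfolding depth_bounded_bisim_def by blast
  finally show ?thesis .
qed

lemma depth_bounded_bisim_step:
  assumes "depth_bounded_bisim otimes delta tau delta' tau' phi"
    and "rel_set_comp otimes (conv (phi n)) u \<le> v"
  shows "rel_set_comp otimes (conv (phi (Suc n))) (rel_set_comp otimes (\<lambda>x y. delta x s y) u)
           \<le> rel_set_comp otimes (\<lambda>x y. delta' x s y) v"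
proof -
  have "rel_comp otimes (conv (phi (Suc n))) (\<lambda>x y. delta x s y)
          \<le> rel_comp otimes (\<lambda>x y. delta' x s y) (conv (phi n))"
    using assms(1) unfolding depth_bounded_bisim_def by (metis diff_Suc_1 le_add1 plus_1_eq_Suc)
  then have "rel_set_comp otimes (rel_comp otimes (conv (phi (Suc n))) (\<lambda>x y. delta x s y)) u
          \<le> rel_set_comp otimes (rel_comp otimes (\<lambda>x y. delta' x s y) (conv (phi n))) u"
    by (simp add: rel_set_comp_mono)
  also have "\<dots> \<le> rel_set_comp otimes (\<lambda>x y. delta' x s y) v"
    using assms(2) by (simp add: rel_set_comp_assoc rel_set_comp_mono)
  finally show ?thesis
    by (simp add: rel_set_comp_assoc)
qed

lemma depth_bounded_bisim_sem_le:
  assumes bisim: "depth_bounded_bisim otimes delta tau delta' tau' phi"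
  shows "in_F n \<alpha> \<Longrightarrow>
    rel_set_comp otimes (conv (phi n)) (sem otimes imp delta tau \<alpha>) \<le> sem otimes imp delta' tau' \<alpha> \<and>
    rel_set_comp otimes (phi n) (sem otimes imp delta' tau' \<alpha>) \<le> sem otimes imp delta tau \<alpha>"
proof (induction rule: in_F.induct)
  case (tau n)
  show ?case
    using depth_bounded_bisim_tau[OF bisim] depth_bounded_bisim_tau[OF depth_bounded_bisim_conv[OF bisim]]
    by simp
next
  case (comp n \<alpha> s)
  then show ?case
    using depth_bounded_bisim_step[OF bisim] depth_bounded_bisim_step[OF depth_bounded_bisim_conv[OF bisim]]
    by simp
next
  case (biimp n \<alpha> a)
  then show ?case
    using rel_set_comp_biimp_le[of "conv (phi n)"] rel_set_comp_biimp_le[of "phi n"] by simp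
next
  case (conj n \<alpha> \<beta>)
  then show ?case
    using rel_set_comp_inf_le[of "conv (phi n)"] rel_set_comp_inf_le[of "phi n"]
    by (simp add: le_fun_def) (meson inf_mono order_trans)
qed

end

theorem mainTheorem16:
  fixes otimes imp :: "'l::complete_lattice \<Rightarrow> 'l \<Rightarrow> 'l"
    and delta :: "'a \<Rightarrow> 's \<Rightarrow> 'a \<Rightarrow> 'l" and tau :: "'a \<Rightarrow> 'l"
    and delta' :: "'b \<Rightarrow> 's \<Rightarrow> 'b \<Rightarrow> 'l" and tau' :: "'b \<Rightarrow> 'l"
    and phi :: "nat \<Rightarrow> 'a \<Rightarrow> 'b \<Rightarrow> 'l"
  assumes "complete_residuated_lattice otimes imp"
    and "depth_bounded_bisim otimes delta tau delta' tau' phi"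
  shows "(\<forall>n (\<alpha>::('l, 's) fformula). in_F n \<alpha> \<longrightarrow>
            rel_set_comp otimes (conv (phi n)) (sem otimes imp delta tau \<alpha>)
              \<le> sem otimes imp delta' tau' \<alpha> \<and>
            rel_set_comp otimes (phi n) (sem otimes imp delta' tau' \<alpha>)
              \<le> sem otimes imp delta tau \<alpha>) \<and>
         (\<forall>n x x'. phi n x x' \<le>
            (INF \<alpha> \<in> {\<alpha>::('l, 's) fformula. in_F n \<alpha>}.
               biimp imp (sem otimes imp delta tau \<alpha> x) (sem otimes imp delta' tau' \<alpha> x')))"
proof -
  interpret residuated otimes imp by (rule residuated.intro) fact
  note preserved = depth_bounded_bisim_sem_le[OF assms(2)]
  have "phi n x x' \<le> biimp imp (sem otimes imp delta tau \<alpha> x) (sem otimes imp delta' tau' \<alpha> x')"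
    if "in_F n \<alpha>" for n x x' and \<alpha> :: "('l, 's) fformula"
    using preserved[OF that] unfolding le_biimp_iff rel_set_comp_le_iff conv_def by blast
  then show ?thesis
    using preserved by (blast intro: INF_greatest)
qed

end
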